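(* Let $C\subseteq F^n$ be a binary perfect code of length $n=2^k-1$ containing $0^n$, and let $\lambda:C\to\{0,1\}$ be any function with $\lambda(0^n)=0$. Let $V_C^\lambda=\{(x+y,\ |x|+\lambda(y),\ x)\mid x\in F^n,\ y\in C\}\subseteq F^{2n+1}$ be the Vasil'ev code, where $|x|=x_1+\dots+x_n \pmod 2$. Let $y'\in C$ and $z=(y',\lambda(y'),0^n)\in V_C^\lambda$. A permutation $\rho_z\in S_{2n+1}$ belongs to $St_{n+1}(\mathrm{Rot}_z(V_C^\lambda))$ if and only if it can be written as $\rho_z=\sigma_{\pi_{y'}}\circ\tau_u$ for some $\pi_{y'}\in \mathrm{Rot}_{y'}(C)$ and some $u\in F^n$ such that for every $y\in C$ $$\lambda(y')+\lambda(y)+\lambda(y'+\pi_{y'}(y))=u\cdot y,$$ where $u\cdot y$ is the scalar product over $\mathbb{F}_2$.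
   Context: $F^n$ is the space of binary vectors of length $n$ with the Hamming metric. A binary code $C\subseteq F^n$ is perfect (1-error-correcting) if every $x\in F^n$ is at distance at most one from exactly one codeword. Permutations $\pi\in S_n$ act on vectors by permuting coordinates. For a code $D$ of length $m$ and a vector $z$, $\mathrm{Rot}_z(D)=\{\pi\in S_m\mid z+\pi(D)=D\}$, and $St_{i}(\mathrm{Rot}_z(D))$ denotes the set of permutations in $\mathrm{Rot}_z(D)$ fixing the coordinate $i$. For $i\in\{1,\dots,n\}$ let $t_i$ be the transposition of coordinates $i$ and $i+n+1$ in $S_{2n+1}$, and for $u\in F^n$ let $\tau_u=\prod_{i\in \mathrm{supp}(u)}t_i$. For $\pi\in S_n$ the duplicator $\sigma_\pi\in S_{2n+1}$ maps $i\mapsto\pi(i)$ and $i+n+1\mapsto \pi(i)+n+1$ for $1\le i\le n$, and fixes $n+1$. Composition $\sigma\circ\tau$ means $\tau$ is applied first. *)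

theory Defs
  imports "HOL-Combinatorics.Permutations" "HOL-Combinatorics.Transposition"
begin

(* Binary vectors of length n are represented by their supports: subsets of {1..n}. *)
definition vecs :: "nat \<Rightarrow> nat set set" where
  "vecs n = Pow {1..n}"

(* addition over F_2 = symmetric difference of supports *)
definition vadd :: "nat set \<Rightarrow> nat set \<Rightarrow> nat set" where
  "vadd x y = (x - y) \<union> (y - x)"

definition hdist :: "nat set \<Rightarrow> nat set \<Rightarrow> nat" where
  "hdist x y = card (vadd x y)"

definition perfect_code :: "nat \<Rightarrow> nat set set \<Rightarrow> bool" where
  "perfect_code n C \<longleftrightarrow> C \<subseteq> vecs n \<and>
     (\<forall>x \<in> vecs n. \<exists>!c. c \<in> C \<and> hdist x c \<le> 1)"

definition pact :: "(nat \<Rightarrow> nat) \<Rightarrow> nat set \<Rightarrow> nat set" where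
  "pact p x = p ` x"

definition Rot :: "nat \<Rightarrow> nat set \<Rightarrow> nat set set \<Rightarrow> (nat \<Rightarrow> nat) set" where
  "Rot m z D = {p. p permutes {1..m} \<and> (\<lambda>d. vadd z (pact p d)) ` D = D}"

definition St :: "nat \<Rightarrow> (nat \<Rightarrow> nat) set \<Rightarrow> (nat \<Rightarrow> nat) set" where
  "St i R = {p \<in> R. p i = i}"

definition wpar :: "nat set \<Rightarrow> bool" where
  "wpar x = odd (card x)"

definition sprod :: "nat set \<Rightarrow> nat set \<Rightarrow> bool" where
  "sprod u y = odd (card (u \<inter> y))"

(* concatenation (a, b, c) in F^{2n+1}, a,c in F^n, b a bit *)
definition concat3 :: "nat \<Rightarrow> nat set \<Rightarrow> bool \<Rightarrow> nat set \<Rightarrow> nat set" where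
  "concat3 n a b c = a \<union> (if b then {n+1} else {}) \<union> ((\<lambda>i. i + n + 1) ` c)"

definition vasilev :: "nat \<Rightarrow> nat set set \<Rightarrow> (nat set \<Rightarrow> bool) \<Rightarrow> nat set set" where
  "vasilev n C lam = {concat3 n (vadd x y) (wpar x \<noteq> lam y) x | x y. x \<in> vecs n \<and> y \<in> C}"

definition tt :: "nat \<Rightarrow> nat \<Rightarrow> nat \<Rightarrow> nat" where
  "tt n i = Transposition.transpose i (i + n + 1)"

(* tau_u = product of t_i over i in supp u (they commute) *)
definition tau :: "nat \<Rightarrow> nat set \<Rightarrow> nat \<Rightarrow> nat" where
  "tau n u = foldr (\<lambda>i f. tt n i \<circ> f) (sorted_list_of_set u) id"

definition sigma :: "nat \<Rightarrow> (nat \<Rightarrow> nat) \<Rightarrow> nat \<Rightarrow> nat" where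
  "sigma n p j = (if 1 \<le> j \<and> j \<le> n then p j
                 else if n + 2 \<le> j \<and> j \<le> 2 * n + 1 then p (j - (n + 1)) + n + 1
                 else j)"

end

theory Submission
  imports Defs
begin

text \<open>
  A permutation \<open>\<rho>\<close> in the stabiliser maps every coordinate pair \<open>{i, i+n+1}\<close> onto
  such a pair: the words \<open>(e\<^sub>i, 1, e\<^sub>i)\<close> and \<open>z + (e\<^sub>j, 1, e\<^sub>j)\<close> lie in \<open>V\<close>,
  and if \<open>\<rho>\<close> split a pair, the image \<open>z + \<rho>(e\<^sub>i, 1, e\<^sub>i)\<close> would be at distance 2
  from one of the latter, whereas the Vasil'ev code has minimum distance 3. Pair-preserving
  permutations fixing \<open>n+1\<close> are exactly the \<open>\<sigma>\<^sub>\<pi> \<circ> \<tau>\<^sub>u\<close>. Such a permutation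
  followed by translation by \<open>z\<close> sends \<open>(x+y, |x|+\<lambda>(y), x)\<close> to
  \<open>(X + y'+\<pi>(y), |x|+\<lambda>(y)+\<lambda>(y'), X)\<close> with \<open>X = \<pi>(x + y\<inter>u)\<close> and \<open>|X| = |x| + u\<cdot>y\<close>;
  this word lies in \<open>V\<close> iff \<open>y'+\<pi>(y) \<in> C\<close> and the stated parity condition holds for
  \<open>y\<close>, independently of \<open>x\<close>.
\<close>

section \<open>Binary vectors\<close>

lemma vadd_commute: "vadd x y = vadd y x"
  by (auto simp: vadd_def)

lemma vadd_assoc: "vadd (vadd x y) z = vadd x (vadd y z)"
  by (auto simp: vadd_def)

lemma vadd_self [simp]: "vadd x x = {}"
  and vadd_empty [simp]: "vadd x {} = x" "vadd {} x = x"
  and vadd_cancel_left [simp]: "vadd x (vadd x y) = y"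
  and vadd_eq_empty_iff [simp]: "vadd x y = {} \<longleftrightarrow> x = y"
  by (auto simp: vadd_def)

lemma vadd_subset: "a \<subseteq> A \<Longrightarrow> b \<subseteq> A \<Longrightarrow> vadd a b \<subseteq> A"
  by (auto simp: vadd_def)

lemma image_vadd: "inj f \<Longrightarrow> f ` vadd a b = vadd (f ` a) (f ` b)"
  by (auto simp: vadd_def image_Un image_set_diff)

lemma wpar_vadd:
  assumes "finite a" "finite b"
  shows "wpar (vadd a b) = (wpar a \<noteq> wpar b)"
proof -
  have "card (vadd a b) + 2 * card (a \<inter> b) = card a + card b"
    using assms card_Int_Diff[of a b] card_Int_Diff[of b a] card_Un_disjoint[of "a - b" "b - a"]
    by (auto simp: vadd_def Int_commute)
  then show ?thesis
    unfolding wpar_def by presburger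
qed

lemma wpar_image: "inj f \<Longrightarrow> wpar (f ` x) = wpar x"
  by (simp add: wpar_def card_image inj_on_subset)

lemma sprod_eq_wpar: "sprod u y = wpar (y \<inter> u)"
  by (simp add: sprod_def wpar_def Int_commute)

section \<open>Words of length 2n+1\<close>

lemma vadd_concat3:
  "\<lbrakk>a \<subseteq> {1..n}; c \<subseteq> {1..n}; a' \<subseteq> {1..n}; c' \<subseteq> {1..n}\<rbrakk> \<Longrightarrow>
    vadd (concat3 n a b c) (concat3 n a' b' c') = concat3 n (vadd a a') (b \<noteq> b') (vadd c c')"
  by (auto simp: concat3_def vadd_def)

lemma card_concat3:
  assumes "a \<subseteq> {1..n}" "c \<subseteq> {1..n}"
  shows "card (concat3 n a b c) = card a + (if b then 1 else 0) + card c"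
proof -
  have fin: "finite a" "finite c"
    using assms by (auto intro: finite_subset)
  have "card (concat3 n a b c) = card (a \<union> (if b then {n+1} else {})) + card ((\<lambda>i. i + n + 1) ` c)"
    unfolding concat3_def using assms fin by (subst card_Un_disjoint) auto
  also have "card ((\<lambda>i. i + n + 1) ` c) = card c"
    by (rule card_image) (simp add: inj_on_def)
  also have "card (a \<union> (if b then {n+1} else {})) = card a + (if b then 1 else 0)"
    using assms fin by (subst card_Un_disjoint) auto
  finally show ?thesis .
qed

lemma concat3_eq_iff:
  assumes "a \<subseteq> {1..n}" "c \<subseteq> {1..n}" "a' \<subseteq> {1..n}" "c' \<subseteq> {1..n}"
  shows "concat3 n a b c = concat3 n a' b' c' \<longleftrightarrow> a = a' \<and> b = b' \<and> c = c'"
proof -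
  have parts: "a = concat3 n a b c \<inter> {1..n}" "b \<longleftrightarrow> n + 1 \<in> concat3 n a b c"
      "c = {i \<in> {1..n}. i + n + 1 \<in> concat3 n a b c}"
    if "a \<subseteq> {1..n}" "c \<subseteq> {1..n}" for a b c
    using that by (auto simp: concat3_def)
  show ?thesis
    using parts[OF assms(1,2), of b] parts[OF assms(3,4), of b'] by auto
qed

lemma mem_concat3:
  assumes "a \<subseteq> {1..n}" "c \<subseteq> {1..n}"
  shows "j \<in> concat3 n a b c \<longleftrightarrow> j \<in> a \<or> (j = n + 1 \<and> b) \<or> (n + 1 < j \<and> j - (n + 1) \<in> c)"
  using assms by (force simp: concat3_def)

section \<open>Coordinate permutations\<close>

lemma coordinate_cases:
  fixes j n :: nat
  obtains (low) i where "i \<in> {1..n}" "j = i" | (high) i where "i \<in> {1..n}" "j = i + n + 1"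
    | (other) "j \<notin> {1..2*n+1} \<or> j = n + 1"
proof (cases "j \<le> n + 1")
  case False
  then show ?thesis
    using that(2)[of "j - (n + 1)"] that(3) by force
qed (use that in force)

definition pair_swap :: "nat \<Rightarrow> nat set \<Rightarrow> nat \<Rightarrow> nat" where
  "pair_swap n u j =
     (if j \<in> u then j + n + 1 else if n + 1 < j \<and> j - (n + 1) \<in> u then j - (n + 1) else j)"

lemma pair_swap_pair_swap [simp]: "u \<subseteq> {1..n} \<Longrightarrow> pair_swap n u (pair_swap n u j) = j"
  by (auto simp: pair_swap_def)

lemma pair_swap_insert:
  assumes "a \<notin> u" "a \<in> {1..n}" "u \<subseteq> {1..n}"
  shows "tt n a \<circ> pair_swap n u = pair_swap n (insert a u)"
  using assms by (force simp: fun_eq_iff tt_def pair_swap_def transpose_def)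

lemma tau_eq_pair_swap:
  assumes "u \<subseteq> {1..n}"
  shows "tau n u = pair_swap n u"
proof -
  have "foldr (\<lambda>i f. tt n i \<circ> f) xs id = pair_swap n (set xs)"
    if "distinct xs" "set xs \<subseteq> {1..n}" for xs
    using that
  proof (induction xs)
    case Nil
    then show ?case by (simp add: fun_eq_iff pair_swap_def)
  next
    case (Cons a xs)
    then have "tt n a \<circ> pair_swap n (set xs) = pair_swap n (insert a (set xs))"
      by (intro pair_swap_insert) auto
    with Cons show ?case
      by (simp add: comp_def)
  qed
  moreover have "finite u"
    using assms by (rule finite_subset) simp
  ultimately show ?thesis
    using assms by (simp add: tau_def)
qed

lemma pair_swap_permutes:
  assumes "u \<subseteq> {1..n}"
  shows "pair_swap n u permutes {1..2*n+1}"
proof (rule inj_imp_permutes)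
  show "inj_on (pair_swap n u) {1..2*n+1}"
    using assms by (metis inj_onI pair_swap_pair_swap)
qed (use assms in \<open>fastforce simp: pair_swap_def subset_iff\<close>)+

lemma pair_swap_concat3:
  assumes "u \<subseteq> {1..n}" "a \<subseteq> {1..n}" "c \<subseteq> {1..n}"
  shows "pair_swap n u ` concat3 n a b c = concat3 n ((a - u) \<union> (c \<inter> u)) b ((c - u) \<union> (a \<inter> u))"
    (is "_ = concat3 n ?a b ?c")
proof -
  have "?a \<subseteq> {1..n}" "?c \<subseteq> {1..n}"
    using assms by auto
  note mem = mem_concat3[OF assms(2,3)] mem_concat3[OF this]
  have "pair_swap n u j \<in> concat3 n a b c \<longleftrightarrow> j \<in> concat3 n ?a b ?c" for j
    using assms
    by (cases rule: coordinate_cases[where j = j and n = n]) (auto simp: mem pair_swap_def)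
  moreover have "pair_swap n u ` S = pair_swap n u -` S" for S
    using pair_swap_pair_swap[OF assms(1)] by (auto simp: image_iff) metis
  ultimately show ?thesis
    by auto
qed

lemma sigma_low: "i \<in> {1..n} \<Longrightarrow> sigma n p i = p i"
  and sigma_high: "i \<in> {1..n} \<Longrightarrow> sigma n p (i + n + 1) = p i + n + 1"
  and sigma_other: "j \<notin> {1..2*n+1} \<or> j = n + 1 \<Longrightarrow> sigma n p j = j"
  by (auto simp: sigma_def)

lemma sigma_inverse:
  assumes "p permutes {1..n}"
  shows "sigma n (inv p) (sigma n p j) = j"
proof -
  have p_in: "p i \<in> {1..n}" if "i \<in> {1..n}" for i
    using permutes_in_image[OF assms] that by blast
  have inv_p: "inv p (p i) = i" for i
    using assms by (simp add: permutes_inverses)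
  show ?thesis
  proof (cases rule: coordinate_cases[where j = j and n = n])
    case (low i)
    then show ?thesis
      by (metis sigma_low p_in inv_p)
  next
    case (high i)
    then show ?thesis
      by (metis sigma_high p_in inv_p)
  qed (simp add: sigma_other)
qed

lemma sigma_permutes:
  assumes "p permutes {1..n}"
  shows "sigma n p permutes {1..2*n+1}"
proof (rule inj_imp_permutes)
  show "inj_on (sigma n p) {1..2*n+1}"
    using sigma_inverse[OF assms] by (metis inj_onI)
  show "sigma n p j \<in> {1..2*n+1}" if "j \<in> {1..2*n+1}" for j
  proof (cases rule: coordinate_cases[where j = j and n = n])
    case (low i)
    then show ?thesis
      using permutes_in_image[OF assms, of i] by (simp add: sigma_low)
  next
    case (high i)
    then show ?thesis
      using permutes_in_image[OF assms, of i] sigma_high[of i n p] by simp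
  qed (use that in \<open>simp add: sigma_other\<close>)
qed (simp_all add: sigma_other)

lemma sigma_concat3:
  assumes "p permutes {1..n}" "a \<subseteq> {1..n}" "c \<subseteq> {1..n}"
  shows "sigma n p ` concat3 n a b c = concat3 n (p ` a) b (p ` c)"
proof -
  have "sigma n p ` a = p ` a"
    using assms(2) by (intro image_cong) (auto simp: sigma_low)
  moreover have "sigma n p ` (if b then {n+1} else {}) = (if b then {n+1} else {})"
    by (simp add: sigma_other)
  moreover have "sigma n p ` ((\<lambda>i. i + n + 1) ` c) = (\<lambda>i. i + n + 1) ` (p ` c)"
    unfolding image_comp using assms(3) by (intro image_cong) (auto simp: sigma_def)
  ultimately show ?thesis
    unfolding concat3_def image_Un by simp
qed

definition partner :: "nat \<Rightarrow> nat \<Rightarrow> nat" where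
  "partner n j = (if j \<le> n then j + n + 1 else j - (n + 1))"

lemma partner_pair:
  assumes "j \<in> {1..2*n+1}" "j \<noteq> n + 1"
  obtains i where "i \<in> {1..n}" "{i, i + n + 1} = {j, partner n j}"
proof (cases "j \<le> n")
  case True
  then show ?thesis
    using that[of j] assms by (auto simp: partner_def)
next
  case False
  then have "j - (n + 1) \<in> {1..n}" "{j - (n + 1), j - (n + 1) + n + 1} = {j, partner n j}"
    using assms by (auto simp: partner_def)
  then show ?thesis
    by (rule that)
qed

lemma permutes_fixpoint_image:
  assumes "f permutes S" "f a = a" "x \<in> S" "x \<noteq> a"
  shows "f x \<in> S - {a}"
  using assms permutes_in_image[OF assms(1)] injD[OF permutes_inj[OF assms(1)], of x a] by auto

lemma pair_preserving_decomposition: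
  assumes rho: "rho permutes {1..2*n+1}" and fix_mid: "rho (n + 1) = n + 1"
    and pairs: "\<And>i. i \<in> {1..n} \<Longrightarrow> rho (i + n + 1) = partner n (rho i)"
  obtains p u where "p permutes {1..n}" "u \<subseteq> {1..n}" "rho = sigma n p \<circ> pair_swap n u"
proof -
  have range: "rho i \<in> {1..2*n+1} - {n + 1}" if "i \<in> {1..n}" for i
    using permutes_fixpoint_image[OF rho fix_mid, of i] that by simp
  define u where "u = {i \<in> {1..n}. n + 1 < rho i}"
  define p where "p i = (if i \<in> {1..n} then (if rho i \<le> n then rho i else rho i - (n + 1)) else i)" for i
  have u: "u \<subseteq> {1..n}"
    by (auto simp: u_def)
  have sigma_p: "sigma n p = rho \<circ> pair_swap n u"
  proof
    fix j
    show "sigma n p j = (rho \<circ> pair_swap n u) j"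
    proof (cases rule: coordinate_cases[where j = j and n = n])
      case (low i)
      then show ?thesis
        using pairs[of i] range[of i] by (auto simp: sigma_def pair_swap_def u_def p_def partner_def)
    next
      case (high i)
      then show ?thesis
        using pairs[of i] range[of i] by (auto simp: sigma_def pair_swap_def u_def p_def partner_def)
    next
      case other
      then have "pair_swap n u j = j"
        using u other by (fastforce simp: pair_swap_def subset_iff)
      moreover have "rho j = j"
        using other fix_mid permutes_not_in[OF rho, of j] by auto
      ultimately show ?thesis
        using other by (simp add: sigma_other)
    qed
  qed
  then have decomp: "rho = sigma n p \<circ> pair_swap n u"
    by (simp add: fun_eq_iff pair_swap_pair_swap[OF u])
  have "p permutes {1..n}"
  proof (rule inj_imp_permutes)
    have "inj (sigma n p)"
      unfolding sigma_p using permutes_inj[OF rho] pair_swap_pair_swap[OF u]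
      by (metis inj_compose inj_on_inverseI)
    then show "inj_on p {1..n}"
      by (metis inj_on_cong inj_on_subset sigma_low subset_UNIV)
    show "p i \<in> {1..n}" if "i \<in> {1..n}" for i
      using range[OF that] that by (auto simp: p_def)
    show "p i = i" if "i \<notin> {1..n}" for i
      using that by (auto simp: p_def)
  qed simp
  then show ?thesis
    using u decomp by (rule that)
qed

section \<open>Perfect codes and the Vasil'ev code\<close>

lemma perfect_code_subset: "perfect_code n C \<Longrightarrow> y \<in> C \<Longrightarrow> y \<subseteq> {1..n}"
  by (auto simp: perfect_code_def vecs_def)

lemma perfect_code_finite: "perfect_code n C \<Longrightarrow> finite C"
  unfolding perfect_code_def vecs_def by (meson finite_Pow_iff finite_atLeastAtMost finite_subset)

lemma perfect_code_distance:
  assumes C: "perfect_code n C" and "y1 \<in> C" "y2 \<in> C" "y1 \<noteq> y2"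
  shows "3 \<le> hdist y1 y2"
proof (rule ccontr)
  assume "\<not> 3 \<le> hdist y1 y2"
  then have le2: "card (vadd y1 y2) \<le> 2"
    by (simp add: hdist_def)
  have "vadd y1 y2 \<noteq> {}"
    using \<open>y1 \<noteq> y2\<close> by simp
  then obtain a where a: "a \<in> vadd y1 y2"
    by blast
  have fin: "finite (vadd y1 y2)"
    using perfect_code_subset[OF C] assms(2,3) vadd_subset by (meson finite_atLeastAtMost finite_subset)
  define x where "x = vadd y1 {a}"
  have "x \<in> vecs n"
    using perfect_code_subset[OF C] assms(2,3) a
    unfolding x_def vecs_def by (auto simp: vadd_def)
  moreover have "hdist x y1 \<le> 1"
    by (simp add: x_def hdist_def vadd_assoc vadd_commute[of "{a}"])
  moreover have "vadd x y2 = vadd y1 y2 - {a}"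
    using a by (auto simp: x_def vadd_def)
  then have "hdist x y2 \<le> 1"
    using le2 fin a by (simp add: hdist_def)
  ultimately show False
    using C assms(2-4) unfolding perfect_code_def by blast
qed

lemma concat3_in_vasilev_iff:
  assumes "C \<subseteq> vecs n" "x \<subseteq> {1..n}" "y \<subseteq> {1..n}"
  shows "concat3 n (vadd x y) b x \<in> vasilev n C lam \<longleftrightarrow> y \<in> C \<and> b = (wpar x \<noteq> lam y)"
proof
  assume "concat3 n (vadd x y) b x \<in> vasilev n C lam"
  then obtain x' y' where x': "x' \<subseteq> {1..n}" and "y' \<in> C"
      and eq: "concat3 n (vadd x y) b x = concat3 n (vadd x' y') (wpar x' \<noteq> lam y') x'"
    unfolding vasilev_def vecs_def by blast
  have y': "y' \<subseteq> {1..n}"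
    using assms(1) \<open>y' \<in> C\<close> by (auto simp: vecs_def)
  have "vadd x y = vadd x' y' \<and> b = (wpar x' \<noteq> lam y') \<and> x = x'"
    using concat3_eq_iff[OF vadd_subset[OF assms(2,3)] assms(2) vadd_subset[OF x' y'] x'] eq
    by (rule iffD1)
  then show "y \<in> C \<and> b = (wpar x \<noteq> lam y)"
    using \<open>y' \<in> C\<close> by (metis vadd_cancel_left)
next
  assume "y \<in> C \<and> b = (wpar x \<noteq> lam y)"
  then show "concat3 n (vadd x y) b x \<in> vasilev n C lam"
    unfolding vasilev_def vecs_def using assms(2) by blast
qed

lemma vasilev_cases:
  assumes "v \<in> vasilev n C lam"
  obtains x y where "x \<subseteq> {1..n}" "y \<in> C" "v = concat3 n (vadd x y) (wpar x \<noteq> lam y) x"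
  using assms by (auto simp: vasilev_def vecs_def)

lemma finite_vasilev: "finite C \<Longrightarrow> finite (vasilev n C lam)"
  unfolding vasilev_def vecs_def by (auto intro: finite_image_set2)

lemma hdist_concat3_words:
  assumes "x1 \<subseteq> {1..n}" "y1 \<subseteq> {1..n}" "x2 \<subseteq> {1..n}" "y2 \<subseteq> {1..n}"
  shows "hdist (concat3 n (vadd x1 y1) b1 x1) (concat3 n (vadd x2 y2) b2 x2)
    = card (vadd (vadd x1 x2) (vadd y1 y2)) + (if b1 \<noteq> b2 then 1 else 0) + card (vadd x1 x2)"
proof -
  have "vadd (concat3 n (vadd x1 y1) b1 x1) (concat3 n (vadd x2 y2) b2 x2)
      = concat3 n (vadd (vadd x1 y1) (vadd x2 y2)) (b1 \<noteq> b2) (vadd x1 x2)"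
    using assms by (simp add: vadd_concat3 vadd_subset)
  also have "vadd (vadd x1 y1) (vadd x2 y2) = vadd (vadd x1 x2) (vadd y1 y2)"
    by (auto simp: vadd_def)
  finally have "hdist (concat3 n (vadd x1 y1) b1 x1) (concat3 n (vadd x2 y2) b2 x2)
      = card (concat3 n (vadd (vadd x1 x2) (vadd y1 y2)) (b1 \<noteq> b2) (vadd x1 x2))"
    by (simp add: hdist_def)
  also have "\<dots> = card (vadd (vadd x1 x2) (vadd y1 y2)) + (if b1 \<noteq> b2 then 1 else 0) + card (vadd x1 x2)"
    using assms by (intro card_concat3) (simp_all add: vadd_subset)
  finally show ?thesis .
qed

lemma vasilev_distance:
  assumes C: "perfect_code n C" and "v1 \<in> vasilev n C lam" "v2 \<in> vasilev n C lam" "v1 \<noteq> v2"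
  shows "3 \<le> hdist v1 v2"
proof -
  obtain x1 y1 where 1: "x1 \<subseteq> {1..n}" "y1 \<in> C" "v1 = concat3 n (vadd x1 y1) (wpar x1 \<noteq> lam y1) x1"
    using assms(2) by (rule vasilev_cases)
  obtain x2 y2 where 2: "x2 \<subseteq> {1..n}" "y2 \<in> C" "v2 = concat3 n (vadd x2 y2) (wpar x2 \<noteq> lam y2) x2"
    using assms(3) by (rule vasilev_cases)
  have y: "y1 \<subseteq> {1..n}" "y2 \<subseteq> {1..n}"
    using perfect_code_subset[OF C] 1(2) 2(2) by auto
  define X where "X = vadd x1 x2"
  define Y where "Y = vadd y1 y2"
  define b where "b = ((wpar x1 \<noteq> lam y1) \<noteq> (wpar x2 \<noteq> lam y2))"
  have X: "X \<subseteq> {1..n}" and Y: "Y \<subseteq> {1..n}"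
    using 1 2 y by (simp_all add: X_def Y_def vadd_subset)
  have dist: "hdist v1 v2 = card (vadd X Y) + (if b then 1 else 0) + card X"
    using hdist_concat3_words[OF 1(1) y(1) 2(1) y(2)] by (simp add: 1(3) 2(3) X_def Y_def b_def)
  have fin: "finite X" "finite Y"
    using X Y by (auto intro: finite_subset)
  show ?thesis
  proof (cases "y1 = y2")
    case True
    have "finite x1" "finite x2"
      using 1 2 by (auto intro: finite_subset)
    with True have "b = wpar X"
      by (auto simp: b_def X_def wpar_vadd)
    moreover have "X \<noteq> {}"
      using True 1(3) 2(3) \<open>v1 \<noteq> v2\<close> by (auto simp: X_def)
    then have "card X \<noteq> 0"
      using fin by simp
    ultimately show ?thesis
      using dist True by (auto simp: Y_def wpar_def)
  next
    case False
    have "3 \<le> card Y"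
      using perfect_code_distance[OF C 1(2) 2(2) False] by (simp add: Y_def hdist_def)
    also have "\<dots> \<le> card (vadd X Y \<union> X)"
      using fin by (intro card_mono) (auto simp: vadd_def)
    also have "\<dots> \<le> card (vadd X Y) + card X"
      by (rule card_Un_le)
    finally show ?thesis
      using dist by simp
  qed
qed

lemma vasilev_translate_pair_word:
  assumes C: "C \<subseteq> vecs n" and "y' \<in> C" and j: "j \<in> {1..2*n+1}" "j \<noteq> n + 1"
  shows "vadd (concat3 n y' (lam y') {}) {j, n + 1, partner n j} \<in> vasilev n C lam"
proof -
  obtain i where i: "i \<in> {1..n}" "{i, i + n + 1} = {j, partner n j}"
    using partner_pair[OF j] .
  have y': "y' \<subseteq> {1..n}"
    using C \<open>y' \<in> C\<close> by (auto simp: vecs_def)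
  have "{j, n + 1, partner n j} = concat3 n {i} True {i}"
    using i by (auto simp: concat3_def)
  then have "vadd (concat3 n y' (lam y') {}) {j, n + 1, partner n j}
      = concat3 n (vadd {i} y') (wpar {i} \<noteq> lam y') {i}"
    using i y' by (simp add: vadd_concat3 vadd_commute wpar_def)
  also have "\<dots> \<in> vasilev n C lam"
    using concat3_in_vasilev_iff[OF C _ y', of "{i}"] i \<open>y' \<in> C\<close> by simp
  finally show ?thesis .
qed

section \<open>Rotations of the Vasil'ev code\<close>

lemma Rot_iff_maps_into:
  assumes "finite D"
  shows "p \<in> Rot m z D \<longleftrightarrow> p permutes {1..m} \<and> (\<forall>d\<in>D. vadd z (pact p d) \<in> D)"
proof -
  have inj: "inj_on (\<lambda>d. vadd z (pact p d)) D" if "p permutes {1..m}"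
    using permutes_inj[OF that]
    by (intro inj_onI) (metis vadd_cancel_left pact_def inj_image_eq_iff)
  show ?thesis
  proof
    assume "p permutes {1..m} \<and> (\<forall>d\<in>D. vadd z (pact p d) \<in> D)"
    then show "p \<in> Rot m z D"
      using endo_inj_surj[OF assms _ inj] by (auto simp: Rot_def)
  qed (auto simp: Rot_def)
qed

lemma rotate_vasilev_word:
  assumes "p permutes {1..n}" "u \<subseteq> {1..n}" "x \<subseteq> {1..n}" "y \<subseteq> {1..n}" "y' \<subseteq> {1..n}"
  shows "vadd (concat3 n y' l {}) (pact (sigma n p \<circ> pair_swap n u) (concat3 n (vadd x y) b x))
    = concat3 n (vadd (p ` vadd x (y \<inter> u)) (vadd y' (p ` y))) (l \<noteq> b) (p ` vadd x (y \<inter> u))"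
proof -
  define x' where "x' = vadd x (y \<inter> u)"
  have x': "x' \<subseteq> {1..n}"
    using assms(3,4) by (auto simp: x'_def vadd_def)
  have px': "p ` x' \<subseteq> {1..n}" and py: "p ` y \<subseteq> {1..n}"
    using permutes_image[OF assms(1)] x' assms(4) by blast+
  have "(vadd x y - u) \<union> (x \<inter> u) = vadd x' y" "(x - u) \<union> (vadd x y \<inter> u) = x'"
    by (auto simp: x'_def vadd_def)
  then have "pact (sigma n p \<circ> pair_swap n u) (concat3 n (vadd x y) b x)
      = sigma n p ` concat3 n (vadd x' y) b x'"
    using pair_swap_concat3[OF assms(2) vadd_subset[OF assms(3,4)] assms(3)]
    by (simp add: pact_def image_comp flip: image_image)
  also have "\<dots> = concat3 n (vadd (p ` x') (p ` y)) b (p ` x')"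
    using sigma_concat3[OF assms(1) vadd_subset[OF x' assms(4)] x'] image_vadd[OF permutes_inj[OF assms(1)]]
    by simp
  finally have "vadd (concat3 n y' l {}) (pact (sigma n p \<circ> pair_swap n u) (concat3 n (vadd x y) b x))
      = concat3 n (vadd y' (vadd (p ` x') (p ` y))) (l \<noteq> b) (p ` x')"
    using assms(5) px' py by (simp add: vadd_concat3 vadd_subset)
  also have "vadd y' (vadd (p ` x') (p ` y)) = vadd (p ` x') (vadd y' (p ` y))"
    by (auto simp: vadd_def)
  finally show ?thesis
    unfolding x'_def .
qed

lemma rotate_vasilev_word_in_vasilev_iff:
  assumes C: "C \<subseteq> vecs n" and p: "p permutes {1..n}" and u: "u \<subseteq> {1..n}" and y': "y' \<subseteq> {1..n}"
    and x: "x \<subseteq> {1..n}" and "y \<in> C"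
  shows "vadd (concat3 n y' l {}) (pact (sigma n p \<circ> pair_swap n u)
        (concat3 n (vadd x y) (wpar x \<noteq> lam y) x)) \<in> vasilev n C lam
      \<longleftrightarrow> vadd y' (pact p y) \<in> C \<and> ((l \<noteq> lam y) \<noteq> lam (vadd y' (pact p y)) \<longleftrightarrow> sprod u y)"
proof -
  have y: "y \<subseteq> {1..n}"
    using C \<open>y \<in> C\<close> by (auto simp: vecs_def)
  define X where "X = p ` vadd x (y \<inter> u)"
  define Y where "Y = vadd y' (p ` y)"
  have "X \<subseteq> {1..n}" "Y \<subseteq> {1..n}"
    using permutes_image[OF p] x y y' by (auto simp: X_def Y_def vadd_def)
  moreover have "wpar X = (wpar x \<noteq> sprod u y)"
    using x y permutes_inj[OF p]
    by (simp add: X_def wpar_image sprod_eq_wpar wpar_vadd finite_subset)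
  ultimately show ?thesis
    using rotate_vasilev_word[OF p u x y y', of l "wpar x \<noteq> lam y"]
    by (auto simp: concat3_in_vasilev_iff[OF C] X_def Y_def pact_def)
qed

lemma rotation_maps_vasilev_into_itself_iff:
  assumes C: "C \<subseteq> vecs n" and p: "p permutes {1..n}" and u: "u \<subseteq> {1..n}" and y': "y' \<subseteq> {1..n}"
  shows "(\<forall>v \<in> vasilev n C lam.
            vadd (concat3 n y' l {}) (pact (sigma n p \<circ> pair_swap n u) v) \<in> vasilev n C lam)
    \<longleftrightarrow> (\<forall>y \<in> C. vadd y' (pact p y) \<in> C \<and> ((l \<noteq> lam y) \<noteq> lam (vadd y' (pact p y)) \<longleftrightarrow> sprod u y))"
    (is "(\<forall>v \<in> _. ?image v \<in> _) \<longleftrightarrow> (\<forall>y \<in> C. ?good y)")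
proof
  assume maps: "\<forall>v \<in> vasilev n C lam. ?image v \<in> vasilev n C lam"
  show "\<forall>y \<in> C. ?good y"
  proof
    fix y
    assume "y \<in> C"
    moreover have "y \<subseteq> {1..n}"
      using C \<open>y \<in> C\<close> by (auto simp: vecs_def)
    ultimately have "concat3 n (vadd {} y) (wpar {} \<noteq> lam y) {} \<in> vasilev n C lam"
      using concat3_in_vasilev_iff[OF C empty_subsetI] by blast
    with maps show "?good y"
      using rotate_vasilev_word_in_vasilev_iff[where l = l and lam = lam, OF C p u y' empty_subsetI \<open>y \<in> C\<close>]
      by blast
  qed
next
  assume good: "\<forall>y \<in> C. ?good y"
  show "\<forall>v \<in> vasilev n C lam. ?image v \<in> vasilev n C lam"
  proof
    fix v
    assume "v \<in> vasilev n C lam"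
    then obtain x y where "x \<subseteq> {1..n}" "y \<in> C" "v = concat3 n (vadd x y) (wpar x \<noteq> lam y) x"
      by (rule vasilev_cases)
    with good show "?image v \<in> vasilev n C lam"
      using rotate_vasilev_word_in_vasilev_iff[where l = l and lam = lam, OF C p u y'] by blast
  qed
qed

lemma sigma_pair_swap_in_St_Rot_vasilev_iff:
  assumes C: "perfect_code n C" and "y' \<in> C" and p: "p permutes {1..n}" and u: "u \<subseteq> {1..n}"
  shows "sigma n p \<circ> pair_swap n u \<in> St (n + 1) (Rot (2*n+1) (concat3 n y' (lam y') {}) (vasilev n C lam))
    \<longleftrightarrow> p \<in> Rot n y' C \<and> (\<forall>y \<in> C. (lam y' \<noteq> lam y) \<noteq> lam (vadd y' (pact p y)) \<longleftrightarrow> sprod u y)"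
proof -
  have Cn: "C \<subseteq> vecs n" and y': "y' \<subseteq> {1..n}"
    using C \<open>y' \<in> C\<close> by (auto simp: perfect_code_def vecs_def)
  have "sigma n p \<circ> pair_swap n u permutes {1..2*n+1}"
    by (rule permutes_compose[OF pair_swap_permutes[OF u] sigma_permutes[OF p]])
  moreover have "(sigma n p \<circ> pair_swap n u) (n + 1) = n + 1"
    using u by (auto simp: sigma_other pair_swap_def)
  ultimately have "sigma n p \<circ> pair_swap n u \<in> St (n + 1) (Rot (2*n+1) (concat3 n y' (lam y') {}) (vasilev n C lam))
    \<longleftrightarrow> (\<forall>v \<in> vasilev n C lam.
          vadd (concat3 n y' (lam y') {}) (pact (sigma n p \<circ> pair_swap n u) v) \<in> vasilev n C lam)"
    by (simp add: St_def Rot_iff_maps_into finite_vasilev perfect_code_finite[OF C])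
  also have "\<dots> \<longleftrightarrow> (\<forall>y \<in> C. vadd y' (pact p y) \<in> C
      \<and> ((lam y' \<noteq> lam y) \<noteq> lam (vadd y' (pact p y)) \<longleftrightarrow> sprod u y))"
    by (rule rotation_maps_vasilev_into_itself_iff[OF Cn p u y'])
  also have "\<dots> \<longleftrightarrow> p \<in> Rot n y' C \<and> (\<forall>y \<in> C. (lam y' \<noteq> lam y) \<noteq> lam (vadd y' (pact p y)) \<longleftrightarrow> sprod u y)"
    unfolding Rot_iff_maps_into[OF perfect_code_finite[OF C]] using p by blast
  finally show ?thesis .
qed

lemma vasilev_rotation_preserves_pairs:
  assumes C: "perfect_code n C" and "{} \<in> C" "\<not> lam {}" "y' \<in> C"
    and rho: "rho \<in> St (n + 1) (Rot (2*n+1) (concat3 n y' (lam y') {}) (vasilev n C lam))"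
    and i: "i \<in> {1..n}"
  shows "rho (i + n + 1) = partner n (rho i)"
proof (rule ccontr)
  assume ne: "rho (i + n + 1) \<noteq> partner n (rho i)"
  define z where "z = concat3 n y' (lam y') {}"
  define V where "V = vasilev n C lam"
  have perm: "rho permutes {1..2*n+1}" and mid: "rho (n + 1) = n + 1"
    and maps: "\<And>v. v \<in> V \<Longrightarrow> vadd z (pact rho v) \<in> V"
    using rho by (auto simp: St_def Rot_def z_def V_def)
  have Cn: "C \<subseteq> vecs n"
    using C by (simp add: perfect_code_def)
  define j where "j = rho i"
  define k where "k = rho (i + n + 1)"
  have j: "j \<in> {1..2*n+1}" "j \<noteq> n + 1" and k: "k \<noteq> j" "k \<noteq> n + 1"
    using i permutes_fixpoint_image[OF perm mid, of i] permutes_fixpoint_image[OF perm mid, of "i + n + 1"]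
      injD[OF permutes_inj[OF perm], of "i + n + 1" i]
    by (auto simp: j_def k_def)
  have "vadd (concat3 n {} (lam {}) {}) {i, n + 1, partner n i} \<in> V"
    using vasilev_translate_pair_word[OF Cn \<open>{} \<in> C\<close>] i by (simp add: V_def)
  then have "{i, n + 1, i + n + 1} \<in> V"
    using i \<open>\<not> lam {}\<close> by (simp add: concat3_def partner_def)
  then have "vadd z (pact rho {i, n + 1, i + n + 1}) \<in> V"
    by (rule maps)
  then have word_k: "vadd z {j, n + 1, k} \<in> V"
    using mid by (simp add: pact_def j_def k_def)
  have word_partner: "vadd z {j, n + 1, partner n j} \<in> V"
    using vasilev_translate_pair_word[OF Cn \<open>y' \<in> C\<close> j] by (simp add: z_def V_def)
  have "partner n j \<noteq> j" "partner n j \<noteq> n + 1" "k \<noteq> partner n j"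
    using j ne by (auto simp: partner_def j_def k_def)
  then have "vadd (vadd z {j, n + 1, k}) (vadd z {j, n + 1, partner n j}) = {k, partner n j}"
    using k by (auto simp: vadd_def)
  then have "hdist (vadd z {j, n + 1, k}) (vadd z {j, n + 1, partner n j}) = 2"
    using \<open>k \<noteq> partner n j\<close> by (simp add: hdist_def)
  moreover from this have "vadd z {j, n + 1, k} \<noteq> vadd z {j, n + 1, partner n j}"
    by (auto simp: hdist_def)
  ultimately show False
    using vasilev_distance[OF C word_k[unfolded V_def] word_partner[unfolded V_def]] by simp
qed

lemma St_Rot_vasilev_decomposition:
  assumes C: "perfect_code n C" and "{} \<in> C" "\<not> lam {}" "y' \<in> C"
    and rho: "rho \<in> St (n + 1) (Rot (2*n+1) (concat3 n y' (lam y') {}) (vasilev n C lam))"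
  obtains p u where "p permutes {1..n}" "u \<subseteq> {1..n}" "rho = sigma n p \<circ> pair_swap n u"
proof (rule pair_preserving_decomposition)
  show "rho permutes {1..2*n+1}" "rho (n + 1) = n + 1"
    using rho by (auto simp: St_def Rot_def)
  show "rho (i + n + 1) = partner n (rho i)" if "i \<in> {1..n}" for i
    using vasilev_rotation_preserves_pairs[OF assms that] .
qed (rule that)

theorem theorem2:
  fixes k n :: nat and C :: "nat set set" and lam :: "nat set \<Rightarrow> bool"
    and y' :: "nat set" and rho :: "nat \<Rightarrow> nat"
  assumes "n = 2 ^ k - 1"
    and "perfect_code n C"
    and "{} \<in> C"
    and "\<not> lam {}"
    and "y' \<in> C"
  shows "rho \<in> St (n + 1) (Rot (2 * n + 1) (concat3 n y' (lam y') {}) (vasilev n C lam))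
     \<longleftrightarrow> (\<exists>p \<in> Rot n y' C. \<exists>u \<in> vecs n.
            rho = sigma n p \<circ> tau n u \<and>
            (\<forall>y \<in> C. (lam y' \<noteq> lam y) \<noteq> lam (vadd y' (pact p y)) \<longleftrightarrow> sprod u y))"
    (is "?stab \<longleftrightarrow> (\<exists>p \<in> Rot n y' C. \<exists>u \<in> vecs n. rho = _ \<and> ?cond p u)")
proof
  assume ?stab
  then obtain p u where p: "p permutes {1..n}" and u: "u \<subseteq> {1..n}"
    and rho: "rho = sigma n p \<circ> pair_swap n u"
    using St_Rot_vasilev_decomposition[where lam = lam, OF assms(2-5) \<open>?stab\<close>] by blast
  then have "p \<in> Rot n y' C \<and> ?cond p u"
    using sigma_pair_swap_in_St_Rot_vasilev_iff[OF assms(2,5) p u] \<open>?stab\<close> by simp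
  moreover have "rho = sigma n p \<circ> tau n u" "u \<in> vecs n"
    using rho u by (simp_all add: tau_eq_pair_swap vecs_def)
  ultimately show "\<exists>p \<in> Rot n y' C. \<exists>u \<in> vecs n. rho = sigma n p \<circ> tau n u \<and> ?cond p u"
    by blast
next
  assume "\<exists>p \<in> Rot n y' C. \<exists>u \<in> vecs n. rho = sigma n p \<circ> tau n u \<and> ?cond p u"
  then obtain p u where "p \<in> Rot n y' C" "?cond p u" and u: "u \<subseteq> {1..n}"
    and "rho = sigma n p \<circ> pair_swap n u"
    by (auto simp: vecs_def tau_eq_pair_swap)
  moreover have "p permutes {1..n}"
    using \<open>p \<in> Rot n y' C\<close> by (simp add: Rot_def)
  ultimately show ?stab
    using sigma_pair_swap_in_St_Rot_vasilev_iff[OF assms(2,5) _ u] by blast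
qed

end
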